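(* Let $\vec s=(s_1,\dots,s_k)\in\mathbb{Z}_+^k$ with $n=\sum_l s_l$, and let $\pi_1,\pi_2,\pi_3$ be three $\vec s$-multipermutations. Then there is a pair $i<j$ such that $\mathrm{LCS}(\pi_i,\pi_j)\geq n^{1/3}$.
   Context: For $\vec s=(s_1,\dots,s_k)\in\mathbb{Z}_+^k$, an $\vec s$-multipermutation is a word over the alphabet $\{1,\dots,k\}$ in which each letter $l$ appears exactly $s_l$ times; its length is $\sum_l s_l$. A common subsequence of two words is a word that is a subsequence (letters taken in order, not necessarily consecutive) of both; $\mathrm{LCS}(w,w')$ is the length of a longest common subsequence of $w$ and $w'$. *)

theory Defs
  imports Complex_Main "HOL-Library.Sublist"
begin

definition multiperm :: "nat \<Rightarrow> (nat \<Rightarrow> nat) \<Rightarrow> nat list \<Rightarrow> bool" where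
  "multiperm k s w \<longleftrightarrow> set w \<subseteq> {1..k} \<and> (\<forall>l\<in>{1..k}. count_list w l = s l)"

definition common_subseq :: "'a list \<Rightarrow> 'a list \<Rightarrow> 'a list \<Rightarrow> bool" where
  "common_subseq u w w' \<longleftrightarrow> subseq u w \<and> subseq u w'"

definition LCS :: "'a list \<Rightarrow> 'a list \<Rightarrow> nat" where
  "LCS w w' = Max {length u | u. common_subseq u w w'}"

end

theory Submission
  imports Defs "HOL-Combinatorics.Permutations"
begin

text \<open>The three words are rearrangements of one another, so each can be read as a bijection
  from the positions of the first word to its own positions, preserving letters. If two such
  position maps are order-concordant on a set S of positions, the letters at S form a common
  subsequence of length |S|. By Erdos-Szekeres, the first two maps are concordant on some A and
  discordant on some D with n \<le> |A| |D|; inside D the first and third maps are concordant on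
  some A' and discordant on some B with |D| \<le> |A'| |B|, and on B the second and third maps are
  concordant. Since n \<le> |A| |A'| |B|, one of the three sets has at least n^(1/3) elements.\<close>

definition concordant_on :: "('a \<Rightarrow> nat) \<Rightarrow> ('a \<Rightarrow> nat) \<Rightarrow> 'a set \<Rightarrow> bool" where
  "concordant_on f g S \<longleftrightarrow> (\<forall>x\<in>S. \<forall>y\<in>S. f x < f y \<longrightarrow> g x < g y)"

definition discordant_on :: "('a \<Rightarrow> nat) \<Rightarrow> ('a \<Rightarrow> nat) \<Rightarrow> 'a set \<Rightarrow> bool" where
  "discordant_on f g S \<longleftrightarrow> (\<forall>x\<in>S. \<forall>y\<in>S. f x < f y \<longrightarrow> g y < g x)"

lemma discordant_on_subset: "discordant_on f g S \<Longrightarrow> T \<subseteq> S \<Longrightarrow> discordant_on f g T"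
  by (auto simp: discordant_on_def)

lemma concordant_on_if_discordant_on:
  assumes "inj_on f S" "discordant_on f g S" "discordant_on f h S"
  shows "concordant_on g h S"
  unfolding concordant_on_def
proof (intro ballI impI)
  fix x y assume xy: "x \<in> S" "y \<in> S" "g x < g y"
  then have "f x \<noteq> f y" using assms(1) by (auto dest: inj_onD)
  moreover have "\<not> f x < f y" using assms(2) xy unfolding discordant_on_def by (meson less_asym)
  ultimately have "f y < f x" by simp
  then show "h x < h y" using assms(3) xy by (auto simp: discordant_on_def)
qed

lemma length_le_LCS:
  assumes "common_subseq u xs ys" shows "length u \<le> LCS xs ys"
proof -
  have "{length u |u. common_subseq u xs ys} \<subseteq> {..length xs}"
    by (auto simp: common_subseq_def dest: list_emb_length)
  then have "finite {length u |u. common_subseq u xs ys}" using finite_subset by blast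
  then show ?thesis unfolding LCS_def using assms by (intro Max_ge) auto
qed

lemma nths_conv_map_filter: "nths xs A = map (nth xs) (filter (\<lambda>i. i \<in> A) [0..<length xs])"
proof (induct xs rule: rev_induct)
  case (snoc x xs) then show ?case by (auto simp: nths_append nth_append)
qed simp

lemma card_le_LCS_if_concordant_on:
  assumes injf: "inj_on f S"
    and fS: "f ` S \<subseteq> {..<length xs}" and gS: "g ` S \<subseteq> {..<length ys}"
    and conc: "concordant_on f g S" and eq: "\<forall>x\<in>S. xs ! f x = ys ! g x"
  shows "card S \<le> LCS xs ys"
proof -
  define L where "L = filter (\<lambda>i. i \<in> f ` S) [0..<length xs]"
  define M where "M = filter (\<lambda>i. i \<in> g ` S) [0..<length ys]"
  define \<phi> where "\<phi> = g \<circ> the_inv_into S f"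
  have set_L: "set L = f ` S" using fS by (auto simp: L_def)
  have set_M: "set M = g ` S" using gS by (auto simp: M_def)
  have \<phi>: "\<phi> (f x) = g x" if "x \<in> S" for x
    using that injf by (simp add: \<phi>_def the_inv_into_f_f)
  have "sorted_wrt (\<lambda>a b. \<phi> a < \<phi> b) L"
  proof (rule sorted_wrt_mono_rel[of _ "(<)"])
    fix a b assume "a \<in> set L" "b \<in> set L" "a < b"
    then show "\<phi> a < \<phi> b" using set_L conc \<phi> by (auto simp: concordant_on_def)
  qed (simp add: L_def sorted_wrt_filter)
  then have "sorted_wrt (<) (map \<phi> L)" by (simp add: sorted_wrt_map)
  moreover have "sorted_wrt (<) M" by (simp add: M_def sorted_wrt_filter)
  moreover have "set M = set (map \<phi> L)" using set_L set_M \<phi> by (auto simp: image_iff)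
  ultimately have M: "M = map \<phi> L" by (rule strict_sorted_equal)
  have "nths ys (g ` S) = map (nth ys) M" by (simp add: nths_conv_map_filter M_def)
  also have "\<dots> = map (nth xs) L" unfolding M using set_L \<phi> eq by auto
  also have "\<dots> = nths xs (f ` S)" by (simp add: nths_conv_map_filter L_def)
  finally have "common_subseq (nths xs (f ` S)) xs ys"
    unfolding common_subseq_def by (metis subseq_conv_nths)
  moreover have "{i. i < length xs \<and> i \<in> f ` S} = f ` S" using fS by auto
  then have "length (nths xs (f ` S)) = card S" by (simp add: length_nths card_image[OF injf])
  ultimately show ?thesis using length_le_LCS by metis
qed

text \<open>The rank of x is the largest size of a concordant chain ending at x (in the order of f).\<close>

lemma concordant_rank_exists:
  assumes fin: "finite D" and injf: "inj_on f D"
  obtains r where "\<And>x. x \<in> D \<Longrightarrow> 1 \<le> r x"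
    and "\<And>x. x \<in> D \<Longrightarrow> \<exists>C\<subseteq>D. concordant_on f g C \<and> card C = r x"
    and "\<And>x y. x \<in> D \<Longrightarrow> y \<in> D \<Longrightarrow> f x < f y \<Longrightarrow> g x < g y \<Longrightarrow> r x < r y"
proof -
  define Ch where "Ch x = {C. C \<subseteq> D \<and> concordant_on f g C \<and> x \<in> C \<and> (\<forall>y\<in>C. f y \<le> f x)}" for x
  define r where "r x = Max (card ` Ch x)" for x
  have fin_Ch: "finite (Ch x)" for x
    by (rule finite_subset[of _ "Pow D"]) (auto simp: Ch_def fin)
  have singleton: "{x} \<in> Ch x" if "x \<in> D" for x using that by (auto simp: Ch_def concordant_on_def)
  have card_le_r: "card C \<le> r x" if "C \<in> Ch x" for C x
    unfolding r_def using fin_Ch that by (intro Max_ge) auto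
  have r_attained: "\<exists>C\<in>Ch x. card C = r x" if "x \<in> D" for x
  proof -
    have "r x \<in> card ` Ch x" unfolding r_def using fin_Ch singleton[OF that] by (intro Max_in) auto
    then show ?thesis by auto
  qed
  show thesis
  proof
    show "1 \<le> r x" if "x \<in> D" for x using card_le_r[OF singleton[OF that]] by simp
    show "\<exists>C\<subseteq>D. concordant_on f g C \<and> card C = r x" if "x \<in> D" for x
      using r_attained[OF that] by (auto simp: Ch_def)
  next
    fix x y assume xy: "x \<in> D" "y \<in> D" "f x < f y" "g x < g y"
    obtain C where C: "C \<in> Ch x" "card C = r x" using r_attained xy by blast
    then have CD: "C \<subseteq> D" and xC: "x \<in> C" and below: "\<forall>z\<in>C. f z \<le> f x"
      and conc: "concordant_on f g C" by (auto simp: Ch_def)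
    have "g z < g y" if "z \<in> C" for z
    proof (cases "z = x")
      case False
      then have "f z \<noteq> f x" using injf CD that xy(1) by (auto dest: inj_onD)
      then have "f z < f x" using below that by force
      then have "g z < g x" using conc that xC unfolding concordant_on_def by blast
      then show ?thesis using xy by simp
    qed (use xy in simp)
    then have "insert y C \<in> Ch y" using CD xy below conc by (auto simp: Ch_def concordant_on_def)
    moreover have "y \<notin> C" using below xy by force
    ultimately show "r x < r y" using card_le_r[of "insert y C" y] CD fin C finite_subset by fastforce
  qed
qed

lemma erdos_szekeres_concordant_discordant:
  assumes fin: "finite D" and injf: "inj_on f D" and injg: "inj_on g D"
  obtains A B where "A \<subseteq> D" "B \<subseteq> D" "concordant_on f g A" "discordant_on f g B"
    "card D \<le> card A * card B"
proof (cases "D = {}")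
  case True then show ?thesis using that by (auto simp: concordant_on_def discordant_on_def)
next
  case False
  obtain r where r_pos: "\<And>x. x \<in> D \<Longrightarrow> 1 \<le> r x"
    and r_chain: "\<And>x. x \<in> D \<Longrightarrow> \<exists>C\<subseteq>D. concordant_on f g C \<and> card C = r x"
    and r_mono: "\<And>x y. x \<in> D \<Longrightarrow> y \<in> D \<Longrightarrow> f x < f y \<Longrightarrow> g x < g y \<Longrightarrow> r x < r y"
    using concordant_rank_exists[OF fin injf] by metis
  define level where "level t = {x \<in> D. r x = t}" for t
  have discordant_level: "discordant_on f g (level t)" for t
    unfolding discordant_on_def
  proof (intro ballI impI)
    fix x y assume "x \<in> level t" "y \<in> level t" "f x < f y"
    moreover from this have "g x \<noteq> g y" using injg by (auto simp: level_def dest: inj_onD)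
    ultimately show "g y < g x" using r_mono by (fastforce simp: level_def)
  qed
  define a where "a = Max (r ` D)"
  have "a \<in> r ` D" unfolding a_def using fin False by (intro Max_in) auto
  then obtain A where A: "A \<subseteq> D" "concordant_on f g A" "card A = a" using r_chain by blast
  define b where "b = Max ((\<lambda>u. card (level u)) ` r ` D)"
  have "b \<in> (\<lambda>u. card (level u)) ` r ` D" unfolding b_def using fin False by (intro Max_in) auto
  then obtain t where t: "card (level t) = b" by blast
  have "card D = (\<Sum>u\<in>r ` D. card (level u))"
    using sum.image_gen[OF fin, of "\<lambda>_. (1::nat)" r] by (simp add: level_def)
  also have "\<dots> \<le> card (r ` D) * b"
    using sum_bounded_above[of "r ` D" "\<lambda>u. card (level u)" b] fin by (simp add: b_def)
  also have "card (r ` D) \<le> card {1..a}"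
    using r_pos fin by (intro card_mono) (auto simp: a_def)
  then have "card (r ` D) * b \<le> card A * card (level t)" using A t by simp
  finally have "card D \<le> card A * card (level t)" .
  moreover have "level t \<subseteq> D" by (auto simp: level_def)
  ultimately show ?thesis using that A discordant_level by blast
qed

lemma le_cube_if_le_product:
  fixes n a b c :: nat assumes "n \<le> a * b * c"
  shows "n \<le> a ^ 3 \<or> n \<le> b ^ 3 \<or> n \<le> c ^ 3"
proof -
  define m where "m = max a (max b c)"
  have "a * b * c \<le> m * m * m" unfolding m_def by (intro mult_le_mono) auto
  then have "n \<le> m ^ 3" using assms by (simp add: power3_eq_cube)
  moreover have "m = a \<or> m = b \<or> m = c" unfolding m_def by (auto simp: max_def)
  ultimately show ?thesis by auto
qed

lemma pairwise_concordant_of_three: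
  assumes fin: "finite E" and inj: "\<And>i. i \<in> {1,2,3} \<Longrightarrow> inj_on (h i) E"
  obtains i j S where "1 \<le> i" "i < j" "j \<le> (3::nat)" "S \<subseteq> E" "concordant_on (h i) (h j) S"
    "card E \<le> card S ^ 3"
proof -
  have inj_1: "inj_on (h 1) E" and inj_2: "inj_on (h 2) E" and inj_3: "inj_on (h 3) E"
    using inj by auto
  obtain A D where AD: "A \<subseteq> E" "D \<subseteq> E" "concordant_on (h 1) (h 2) A"
    "discordant_on (h 1) (h 2) D" "card E \<le> card A * card D"
    by (rule erdos_szekeres_concordant_discordant[OF fin inj_1 inj_2])
  obtain A' B where AB: "A' \<subseteq> D" "B \<subseteq> D" "concordant_on (h 1) (h 3) A'"
    "discordant_on (h 1) (h 3) B" "card D \<le> card A' * card B"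
    by (rule erdos_szekeres_concordant_discordant[OF finite_subset[OF AD(2) fin]
          inj_on_subset[OF inj_1 AD(2)] inj_on_subset[OF inj_3 AD(2)]])
  have concordant_B: "concordant_on (h 2) (h 3) B"
  proof (rule concordant_on_if_discordant_on)
    show "inj_on (h 1) B" using inj_1 AB(2) AD(2) by (meson inj_on_subset order.trans)
    show "discordant_on (h 1) (h 2) B" using AD(4) AB(2) by (rule discordant_on_subset)
  qed (rule AB(4))
  have A'_E: "A' \<subseteq> E" and B_E: "B \<subseteq> E" using AB(1,2) AD(2) by auto
  have "card E \<le> card A * card A' * card B"
    using AD(5) AB(5) by (metis mult.assoc le_trans mult_le_mono2)
  then consider "card E \<le> card A ^ 3" | "card E \<le> card A' ^ 3" | "card E \<le> card B ^ 3"
    using le_cube_if_le_product by blast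
  then show thesis
  proof cases
    case 1 show thesis by (intro that[of 1 2 A] AD(1,3) 1) simp_all
  next
    case 2 show thesis by (intro that[of 1 3 A'] A'_E AB(3) 2) simp_all
  next
    case 3 show thesis by (intro that[of 2 3 B] B_E concordant_B 3) simp_all
  qed
qed

lemma index_permutation_if_mset_eq:
  assumes "mset ys = mset xs"
  obtains p where "p permutes {..<length xs}" "\<forall>x<length xs. xs ! x = ys ! p x"
proof -
  obtain p where p: "p permutes {..<length ys}" "permute_list p ys = xs"
    by (rule mset_eq_permutation[OF assms[symmetric]])
  have "length ys = length xs" using assms by (metis size_mset)
  with p show thesis using that permute_list_nth by metis
qed

lemma LCS_cube_ge_length:
  assumes "\<And>i. i \<in> {1,2,3} \<Longrightarrow> mset (w i) = mset (w 1)"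
  shows "\<exists>i j. 1 \<le> i \<and> i < j \<and> j \<le> (3::nat) \<and> length (w 1) \<le> LCS (w i) (w j) ^ 3"
proof -
  define n where "n = length (w 1)"
  have "\<exists>p. p permutes {..<n} \<and> (\<forall>x<n. w 1 ! x = w i ! p x)" if i: "i \<in> {1,2,3}" for i
  proof -
    obtain p where "p permutes {..<n}" "\<forall>x<n. w 1 ! x = w i ! p x"
      unfolding n_def by (rule index_permutation_if_mset_eq[OF assms[OF i]])
    then show ?thesis by blast
  qed
  then have "\<forall>i\<in>{1,2,3}. \<exists>p. p permutes {..<n} \<and> (\<forall>x<n. w 1 ! x = w i ! p x)"
    by blast
  from bchoice[OF this]
  obtain h where h: "\<forall>i\<in>{1,2,3}. h i permutes {..<n} \<and> (\<forall>x<n. w 1 ! x = w i ! h i x)" ..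
  have h_perm: "h i permutes {..<n}" if "i \<in> {1,2,3}" for i using h that by blast
  have h_letter: "w i ! h i x = w 1 ! x" if "i \<in> {1,2,3}" "x < n" for i x
    using h that by metis
  have h_bound: "h i x < n" if "i \<in> {1,2,3}" "x < n" for i x
    using permutes_in_image[OF h_perm[OF that(1)], of x] that(2) by simp
  have length: "length (w i) = n" if "i \<in> {1,2,3}" for i
    using assms[OF that] unfolding n_def by (metis size_mset)
  have "inj_on (h i) {..<n}" if "i \<in> {1,2,3}" for i using h_perm[OF that] by (rule permutes_inj_on)
  then obtain i j S where ij: "1 \<le> i" "i < j" "j \<le> 3" and S: "S \<subseteq> {..<n}"
    and conc: "concordant_on (h i) (h j) S" and n_le: "card {..<n} \<le> card S ^ 3"
    by (rule pairwise_concordant_of_three[OF finite_lessThan])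
  have i: "i \<in> {1,2,3}" and j: "j \<in> {1,2,3}" using ij by auto
  have "card S \<le> LCS (w i) (w j)"
  proof (rule card_le_LCS_if_concordant_on[OF _ _ _ conc])
    show "inj_on (h i) S" using h_perm[OF i] by (rule permutes_inj_on)
    show "h i ` S \<subseteq> {..<length (w i)}" "h j ` S \<subseteq> {..<length (w j)}"
      using S h_bound length i j by auto
    show "\<forall>x\<in>S. w i ! h i x = w j ! h j x" using S h_letter i j by auto
  qed
  then have "card S ^ 3 \<le> LCS (w i) (w j) ^ 3" by (simp add: power_mono)
  with n_le have "n \<le> LCS (w i) (w j) ^ 3" by (simp add: order.trans)
  then show ?thesis using ij unfolding n_def by blast
qed

lemma multiperm_mset_eq:
  assumes "multiperm k s w" "multiperm k s w'" shows "mset w = mset w'"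
proof (rule multiset_eqI)
  fix l show "count (mset w) l = count (mset w') l"
  proof (cases "l \<in> {1..k}")
    case False
    then have "l \<notin> set w" "l \<notin> set w'" using assms by (auto simp: multiperm_def)
    then show ?thesis by (simp add: count_mset count_list_0_iff)
  qed (use assms in \<open>simp add: multiperm_def count_mset\<close>)
qed

lemma length_multiperm: "multiperm k s w \<Longrightarrow> length w = (\<Sum>l=1..k. s l)"
  using sum_count_set[of w "{1..k}"] by (simp add: multiperm_def)

lemma powr_one_third_le_if_le_cube:
  fixes n c :: nat assumes "n \<le> c ^ 3" shows "real n powr (1/3) \<le> real c"
proof (cases "c = 0")
  case False
  have "real n powr (1/3) \<le> (real c ^ 3) powr (1/3)"
    using assms by (intro powr_mono2) (auto simp flip: of_nat_power)
  also have "real c ^ 3 = real c powr real 3" using False by (simp add: powr_realpow)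
  also have "(real c powr real 3) powr (1/3) = real c powr (real 3 * (1/3))" by (rule powr_powr)
  also have "\<dots> = real c" using False by simp
  finally show ?thesis .
qed (use assms in simp)

theorem lemma5:
  fixes k :: nat and s :: "nat \<Rightarrow> nat" and n :: nat and \<pi> :: "nat \<Rightarrow> nat list"
  assumes "\<forall>l\<in>{1..k}. s l > 0"
    and "n = (\<Sum>l=1..k. s l)"
    and "\<forall>i\<in>{1,2,3}. multiperm k s (\<pi> i)"
  shows "\<exists>i j. 1 \<le> i \<and> i < j \<and> j \<le> 3 \<and> real (LCS (\<pi> i) (\<pi> j)) \<ge> real n powr (1/3)"
proof -
  have mset_eq: "mset (\<pi> i) = mset (\<pi> 1)" if "i \<in> {1,2,3}" for i
    using assms(3) that by (meson insertI1 multiperm_mset_eq)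
  have length: "length (\<pi> 1) = n" using assms(2,3) by (metis insertI1 length_multiperm)
  obtain i j where "1 \<le> i" "i < j" "j \<le> 3" "n \<le> LCS (\<pi> i) (\<pi> j) ^ 3"
    using LCS_cube_ge_length[of \<pi>, OF mset_eq] unfolding length by blast
  then show ?thesis by (meson powr_one_third_le_if_le_cube)
qed

end
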